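(* Let $(X,\mathcal{R})$ be a partially metric association scheme with respect to $R_1$, whose scheme graph $\Gamma$ is connected with valency $k=3$ and $a_1=p^1_{11}=0$. Let $E$ be a minimal scheme idempotent with multiplicity three and let $\theta$ be the corresponding eigenvalue of $\Gamma$ on $E$. Let $u_1,u_2$ be adjacent vertices of $\Gamma$, let $v_1,v_2$ be the other two neighbors of $u_1$, and let $v_3,v_4$ be the other two neighbors of $u_2$. Fix any vertex $x$ and put $\psi_i=\omega_{xu_i}$ ($i=1,2$) and $\phi_i=\omega_{xv_i}$ ($i=1,2,3,4$). Then $$\{\phi_3,\phi_4\}=\left\{\tfrac12\big(\theta\psi_2-\psi_1+(\phi_1-\phi_2)\big),\ \tfrac12\big(\theta\psi_2-\psi_1-(\phi_1-\phi_2)\big)\right\}.$$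
   Context: A (symmetric) association scheme with rank $d+1$ on a finite set $X$ ($|X|=n$) is a partition $\mathcal{R}=\{R_0,\dots,R_d\}$ of $X\times X$ with $R_0$ the diagonal, each $R_i$ symmetric, and numbers $p^h_{ij}$ such that for every $(x,y)\in R_h$ the number of $z$ with $(x,z)\in R_i$, $(z,y)\in R_j$ equals $p^h_{ij}$. The scheme graph of $R_1$ is the graph on $X$ with $x\sim y$ iff $(x,y)\in R_1$, with adjacency matrix $A_1$. The Bose–Mesner algebra has a basis of minimal scheme idempotents $E_0=\frac1nJ,\dots,E_d$; the multiplicity of $E_j$ is its rank, and if $A_1E_j=\theta E_j$ then $\theta$ is the corresponding eigenvalue on $E_j$. The scheme is partially metric with respect to the connected relation $R_1$ if the distance-$2$ relation of its scheme graph is a relation of the scheme. The cosine for $E$ of a pair $(x,y)$ is $\omega_{xy}=E_{xy}/E_{xx}$ (this depends only on the relation containing $(x,y)$). *)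

theory Defs
  imports "HOL-Analysis.Analysis"
begin

text \<open>The vertex set X is the (finite) type 'n.  The partition R_0,...,R_d of X x X is
  encoded by a function R :: 'n => 'n => nat with (x,y) in R_i iff R x y = i.\<close>

definition sym_assoc_scheme :: "('n::finite \<Rightarrow> 'n \<Rightarrow> nat) \<Rightarrow> nat \<Rightarrow> bool" where
  "sym_assoc_scheme R d \<longleftrightarrow>
     (\<forall>x y. R x y \<le> d) \<and>
     (\<forall>i\<le>d. \<exists>x y. R x y = i) \<and>
     (\<forall>x y. R x y = 0 \<longleftrightarrow> x = y) \<and>
     (\<forall>x y. R x y = R y x) \<and>
     (\<forall>h\<le>d. \<forall>i\<le>d. \<forall>j\<le>d. \<exists>p::nat. \<forall>x y. R x y = h \<longrightarrow>
         card {z. R x z = i \<and> R z y = j} = p)"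

definition rel_matrix :: "('n::finite \<Rightarrow> 'n \<Rightarrow> nat) \<Rightarrow> nat \<Rightarrow> real^'n^'n" where
  "rel_matrix R i = (\<chi> x y. if R x y = i then 1 else 0)"

definition adj :: "('n \<Rightarrow> 'n \<Rightarrow> nat) \<Rightarrow> 'n \<Rightarrow> 'n \<Rightarrow> bool" where
  "adj R x y \<longleftrightarrow> R x y = 1"

definition scheme_graph_connected :: "('n \<Rightarrow> 'n \<Rightarrow> nat) \<Rightarrow> bool" where
  "scheme_graph_connected R \<longleftrightarrow> (\<forall>x y. (x, y) \<in> {(a, b). adj R a b}\<^sup>*)"

definition dist2 :: "('n \<Rightarrow> 'n \<Rightarrow> nat) \<Rightarrow> 'n \<Rightarrow> 'n \<Rightarrow> bool" where
  "dist2 R x y \<longleftrightarrow> x \<noteq> y \<and> \<not> adj R x y \<and> (\<exists>z. adj R x z \<and> adj R z y)"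

definition partially_metric :: "('n \<Rightarrow> 'n \<Rightarrow> nat) \<Rightarrow> nat \<Rightarrow> bool" where
  "partially_metric R d \<longleftrightarrow> (\<exists>h\<le>d. \<forall>x y. R x y = h \<longleftrightarrow> dist2 R x y)"

text \<open>Bose--Mesner algebra: span of the relation matrices A_0,...,A_d.\<close>
definition bose_mesner :: "('n::finite \<Rightarrow> 'n \<Rightarrow> nat) \<Rightarrow> (real^'n^'n) set" where
  "bose_mesner R = {M. \<exists>c::nat \<Rightarrow> real. \<forall>x y. M $ x $ y = c (R x y)}"

definition minimal_idempotent :: "('n::finite \<Rightarrow> 'n \<Rightarrow> nat) \<Rightarrow> real^'n^'n \<Rightarrow> bool" where
  "minimal_idempotent R E \<longleftrightarrow>
     E \<in> bose_mesner R \<and> E ** E = E \<and> E \<noteq> 0 \<and>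
     (\<forall>F \<in> bose_mesner R. F ** F = F \<longrightarrow> E ** F = F \<longrightarrow> F = 0 \<or> F = E)"

definition cosine :: "real^'n^'n \<Rightarrow> 'n \<Rightarrow> 'n \<Rightarrow> real" where
  "cosine E x y = E $ x $ y / E $ x $ x"

end

theory Submission
  imports Defs
begin

text \<open>The rows e_y of E form a Gram representation of E in a 3-dimensional space:
  e_y \<bullet> e_z = E_yz depends only on the relation of (y,z). Since a_1 = 0, the vectors
  e_v1 - e_v2 and e_v3 - e_v4 are both orthogonal to e_u1 and e_u2 and have the same length;
  connectivity makes e_u1, e_u2 independent, so the two differences agree up to sign.
  Taking x-components and combining with the eigenvalue equation at u2,
  e_u1 + e_v3 + e_v4 = \<theta> e_u2, gives the sum and the difference of \<phi>_3 and \<phi>_4.\<close>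

lemma orthogonal_pair_to_plane_dim3_zero:
  fixes p q a w :: "'a::euclidean_space"
  assumes "dim S = 3" "p \<in> span S" "q \<in> span S" "a \<in> span S" "w \<in> span S"
    and "p \<noteq> 0" "q \<notin> span {p}"
    and "a \<bullet> p = 0" "a \<bullet> q = 0" "w \<bullet> p = 0" "w \<bullet> q = 0" "w \<bullet> a = 0"
  shows "a = 0 \<or> w = 0"
proof (rule ccontr)
  assume nz: "\<not> (a = 0 \<or> w = 0)"
  define q' where "q' = q - ((p \<bullet> q) / (p \<bullet> p)) *\<^sub>R p"
  have "q' \<noteq> 0"
    using assms(7) unfolding q'_def by (metis eq_iff_diff_eq_0 span_base span_mul singletonI)
  moreover have "p \<bullet> q' = 0" "a \<bullet> q' = 0" "w \<bullet> q' = 0"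
    using assms(6,8-11) unfolding q'_def by (simp_all add: inner_diff_right inner_commute)
  ultimately have po: "pairwise orthogonal {p, q', a, w}" and nz4: "0 \<notin> {p, q', a, w}"
    and "card {p, q', a, w} = 4"
    using assms(6,8,10,12) nz by (auto simp: pairwise_def orthogonal_def inner_commute card_insert_if)
  moreover have "card {p, q', a, w} \<le> dim (span S)"
  proof (rule independent_card_le_dim)
    show "{p, q', a, w} \<subseteq> span S"
      using assms(2-5) unfolding q'_def by (auto intro: span_diff span_scale)
    show "independent {p, q', a, w}"
      using pairwise_orthogonal_independent[OF po] nz4 by blast
  qed
  ultimately show False using assms(1) by simp
qed

lemma orthogonal_to_plane_dim3_eq_or_neg:
  fixes p q a b :: "'a::euclidean_space"
  assumes "dim S = 3" "p \<in> span S" "q \<in> span S" "a \<in> span S" "b \<in> span S"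
    and "p \<noteq> 0" "q \<notin> span {p}"
    and "a \<bullet> p = 0" "a \<bullet> q = 0" "b \<bullet> p = 0" "b \<bullet> q = 0"
    and "a \<bullet> a = b \<bullet> b"
  shows "b = a \<or> b = - a"
proof (cases "a = 0")
  case True
  then show ?thesis using assms(12) by simp
next
  case False
  define t where "t = (a \<bullet> b) / (a \<bullet> a)"
  have "b - t *\<^sub>R a = 0"
  proof -
    have "a = 0 \<or> b - t *\<^sub>R a = 0"
      by (rule orthogonal_pair_to_plane_dim3_zero[OF assms(1-4) span_diff[OF assms(5) span_scale[OF assms(4)]] assms(6-9)])
         (use assms(8-11) False in \<open>simp_all add: t_def inner_diff_left inner_diff_right inner_commute\<close>)
    then show ?thesis using False by simp
  qed
  then have b: "b = t *\<^sub>R a" by simp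
  then have "t * t = 1" using assms(12) False by simp
  then have "t = 1 \<or> t = -1" by algebra
  then show ?thesis using b by auto
qed

lemma idempotent_symmetric_row_inner:
  fixes E :: "real^'n^'n"
  assumes "E ** E = E" and "\<And>y z. E $ y $ z = E $ z $ y"
  shows "E $ y \<bullet> E $ z = E $ y $ z"
proof -
  have "E $ y \<bullet> E $ z = (\<Sum>k\<in>UNIV. E $ y $ k * E $ k $ z)"
    by (simp add: inner_vec_def assms(2)[of _ z])
  also have "\<dots> = (E ** E) $ y $ z" by (simp add: matrix_matrix_mult_def)
  finally show ?thesis using assms(1) by simp
qed

lemma minimal_idempotent_gram:
  fixes E :: "real^'n^'n"
  assumes "sym_assoc_scheme R d" and "minimal_idempotent R E"
  obtains c where "\<And>y z. E $ y $ z = E $ z $ y" and "\<And>y z. E $ y \<bullet> E $ z = c (R y z)"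
proof -
  obtain c where c: "\<And>y z. E $ y $ z = c (R y z)"
    using assms(2) unfolding minimal_idempotent_def bose_mesner_def by blast
  moreover have Esym: "\<And>y z. E $ y $ z = E $ z $ y"
    using c assms(1) by (simp add: sym_assoc_scheme_def)
  ultimately show ?thesis
    using that idempotent_symmetric_row_inner[of E] assms(2) by (simp add: minimal_idempotent_def)
qed

text \<open>If e_v = t e_u then c_0 = t^2 c_0 and c_1 = t c_0, so |e_z - t e_y|^2 = c_0 - 2 t c_1 + t^2 c_0
  vanishes on every edge y z; by connectivity all e_y then lie on the line through e_u.\<close>

lemma gram_neighbour_not_in_span:
  fixes e :: "'n \<Rightarrow> 'a::euclidean_space"
  assumes gram: "\<And>y z. e y \<bullet> e z = c (R y z)"
    and R0: "\<And>y. R y y = 0" and Rsym: "\<And>y z. R y z = R z y"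
    and conn: "scheme_graph_connected R" and dim: "dim (range e) > 1"
    and uv: "adj R u v"
  shows "e v \<notin> span {e u}"
proof
  assume "e v \<in> span {e u}"
  then obtain t where t: "e v = t *\<^sub>R e u" by (auto simp: span_singleton)
  have "c 0 = e v \<bullet> e v" using gram[of v v] R0 by simp
  also have "\<dots> = t * t * (e u \<bullet> e u)" by (simp add: t)
  finally have c0: "c 0 = t * t * c 0" using gram[of u u] R0 by simp
  have c1: "c 1 = t * c 0"
    using gram[of u v] gram[of u u] uv R0 by (simp add: t adj_def)
  have edge_scales: "e z = t *\<^sub>R e y" if "adj R y z" for y z
  proof -
    have "(e z - t *\<^sub>R e y) \<bullet> (e z - t *\<^sub>R e y) = c 0 - 2 * t * c 1 + t * t * c 0"
      using that by (simp add: inner_diff_left inner_diff_right gram R0 Rsym[of z y] adj_def algebra_simps)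
    also have "\<dots> = 0" using c0 c1 by algebra
    finally show ?thesis by simp
  qed
  have "e y \<in> span {e u}" for y
  proof -
    have "(u, y) \<in> {(a, b). adj R a b}\<^sup>*"
      using conn by (simp add: scheme_graph_connected_def)
    then show ?thesis
    proof (induction rule: rtrancl_induct)
      case base
      then show ?case by (simp add: span_base)
    next
      case (step y z)
      then show ?case using edge_scales[of y z] by (simp add: span_mul)
    qed
  qed
  then have "dim (range e) \<le> card {e u}" by (intro dim_le_card) auto
  then show False using dim by simp
qed

lemma triangle_free_neighbours_dist2:
  fixes R :: "'n::finite \<Rightarrow> 'n \<Rightarrow> nat"
  assumes "\<And>y z. R y z = R z y"
    and "\<forall>y w. adj R y w \<longrightarrow> card {z. adj R y z \<and> adj R z w} = 0"
    and "adj R y z" "adj R y w" "z \<noteq> w"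
  shows "dist2 R z w"
proof -
  have "\<not> adj R z w"
  proof
    assume "adj R z w"
    then have "z \<in> {v. adj R y v \<and> adj R v w}" using assms(3) by simp
    then show False using assms(2,4) by (metis card_0_eq empty_iff finite)
  qed
  then show ?thesis
    using assms(1,3-5) unfolding dist2_def adj_def by metis
qed

lemma neighbours_same_relation:
  fixes R :: "'n::finite \<Rightarrow> 'n \<Rightarrow> nat"
  assumes "sym_assoc_scheme R d" and "partially_metric R d"
    and "\<forall>y w. adj R y w \<longrightarrow> card {z. adj R y z \<and> adj R z w} = 0"
  obtains h where "\<And>y z w. adj R y z \<Longrightarrow> adj R y w \<Longrightarrow> z \<noteq> w \<Longrightarrow> R z w = h"
proof -
  obtain h where h: "\<And>y z. R y z = h \<longleftrightarrow> dist2 R y z"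
    using assms(2) unfolding partially_metric_def by blast
  have "\<And>y z. R y z = R z y" using assms(1) by (simp add: sym_assoc_scheme_def)
  then show ?thesis
    using that[of h] triangle_free_neighbours_dist2[of R, OF _ assms(3)] h by presburger
qed

lemma gram_cherry_difference:
  fixes e :: "'n \<Rightarrow> 'a::real_inner"
  assumes gram: "\<And>y z. e y \<bullet> e z = c (R y z)"
    and R0: "\<And>y. R y y = 0" and Rsym: "\<And>y z. R y z = R z y"
    and same: "\<And>y z w. adj R y z \<Longrightarrow> adj R y w \<Longrightarrow> z \<noteq> w \<Longrightarrow> R z w = h"
    and "adj R y y'" "adj R y z" "adj R y w" "z \<noteq> w" "z \<noteq> y'" "w \<noteq> y'"
  shows "(e z - e w) \<bullet> e y = 0" and "(e z - e w) \<bullet> e y' = 0"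
    and "(e z - e w) \<bullet> (e z - e w) = 2 * (c 0 - c h)"
proof -
  have "R z y = 1" "R w y = 1" using assms(6,7) Rsym by (auto simp: adj_def)
  moreover have "R z y' = h" "R w y' = h" "R w z = h"
    using same[OF assms(6,5,9)] same[OF assms(7,5,10)] same[OF assms(7,6)] assms(8) by auto
  ultimately show "(e z - e w) \<bullet> e y = 0" "(e z - e w) \<bullet> e y' = 0"
    "(e z - e w) \<bullet> (e z - e w) = 2 * (c 0 - c h)"
    by (simp_all add: inner_diff_left inner_diff_right gram R0 Rsym[of z w])
qed

lemma rel_matrix_mult_row:
  fixes M :: "real^'m^'n::finite"
  shows "(rel_matrix R i ** M) $ y = (\<Sum>z | R y z = i. M $ z)"
proof (rule vec_eq_iff[THEN iffD2, rule_format])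
  fix w
  have "(rel_matrix R i ** M) $ y $ w = (\<Sum>z\<in>UNIV. if R y z = i then M $ z $ w else 0)"
    by (simp add: matrix_matrix_mult_def rel_matrix_def) (rule sum.cong, auto)
  also have "\<dots> = (\<Sum>z | R y z = i. M $ z $ w)" by (simp add: sum.If_cases)
  finally show "(rel_matrix R i ** M) $ y $ w = (\<Sum>z | R y z = i. M $ z) $ w"
    by (simp add: sum_component)
qed

lemma rel_matrix_eigen_neighbour_sum:
  fixes R :: "'n::finite \<Rightarrow> 'n \<Rightarrow> nat" and E :: "real^'m^'n"
  assumes "rel_matrix R 1 ** E = \<theta> *\<^sub>R E" and "card {z. adj R y z} = 3"
    and "adj R y a" "adj R y b" "adj R y b'" and "distinct [a, b, b']"
  shows "E $ a + E $ b + E $ b' = \<theta> *\<^sub>R E $ y"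
proof -
  have "{z. adj R y z} = {a, b, b'}"
  proof (rule card_subset_eq[symmetric])
    show "card {a, b, b'} = card {z. adj R y z}" using assms(2,6) by simp
  qed (use assms(3-5) in auto)
  then show ?thesis
    using rel_matrix_mult_row[of R 1 E y] assms(1,6) by (simp add: adj_def add.assoc)
qed

lemma pair_eq_half_sum_diff:
  fixes p q s d :: real
  assumes "p + q = s" and "p - q = d \<or> p - q = - d"
  shows "{p, q} = {(s + d) / 2, (s - d) / 2}"
  using assms by (auto simp: field_simps)

lemma cosine_pair_from_rows:
  fixes E :: "real^'n^'n"
  assumes Esym: "\<And>y z. E $ y $ z = E $ z $ y"
    and sum: "E $ a + E $ p + E $ q = \<theta> *\<^sub>R E $ b"
    and diff: "E $ p - E $ q = E $ r - E $ s \<or> E $ p - E $ q = - (E $ r - E $ s)"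
  shows "{cosine E x p, cosine E x q} =
    {(\<theta> * cosine E x b - cosine E x a + (cosine E x r - cosine E x s)) / 2,
     (\<theta> * cosine E x b - cosine E x a - (cosine E x r - cosine E x s)) / 2}"
proof (rule pair_eq_half_sum_diff)
  have cos: "cosine E x y = E $ y $ x / E $ x $ x" for y
    using Esym[of x y] by (simp add: cosine_def)
  have "E $ a $ x + E $ p $ x + E $ q $ x = \<theta> * E $ b $ x"
    using sum by (auto simp: vec_eq_iff)
  then show "cosine E x p + cosine E x q = \<theta> * cosine E x b - cosine E x a"
    by (simp add: cos add_divide_distrib[symmetric] diff_divide_distrib[symmetric])
  have "E $ p $ x - E $ q $ x = E $ r $ x - E $ s $ x
      \<or> E $ p $ x - E $ q $ x = - (E $ r $ x - E $ s $ x)"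
    using diff by (auto simp: vec_eq_iff)
  then show "cosine E x p - cosine E x q = cosine E x r - cosine E x s
      \<or> cosine E x p - cosine E x q = - (cosine E x r - cosine E x s)"
    by (simp only: cos diff_divide_distrib[symmetric] minus_divide_left) auto
qed

theorem lemma4p1:
  fixes R :: "'n::finite \<Rightarrow> 'n \<Rightarrow> nat" and d :: nat
    and E :: "real^'n^'n" and \<theta> :: real
    and u1 u2 v1 v2 v3 v4 x :: 'n
  assumes scheme: "sym_assoc_scheme R d"
    and d1: "1 \<le> d"
    and pm: "partially_metric R d"
    and conn: "scheme_graph_connected R"
    and val: "\<forall>y. card {z. adj R y z} = 3"
    and a1: "\<forall>y w. adj R y w \<longrightarrow> card {z. adj R y z \<and> adj R z w} = 0"
    and E_min: "minimal_idempotent R E"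
    and E_mult: "rank E = 3"
    and E_eig: "rel_matrix R 1 ** E = \<theta> *\<^sub>R E"
    and u12: "adj R u1 u2"
    and v12: "adj R u1 v1" "adj R u1 v2" "v1 \<noteq> v2" "v1 \<noteq> u2" "v2 \<noteq> u2"
    and v34: "adj R u2 v3" "adj R u2 v4" "v3 \<noteq> v4" "v3 \<noteq> u1" "v4 \<noteq> u1"
  shows "{cosine E x v3, cosine E x v4} =
    {(\<theta> * cosine E x u2 - cosine E x u1 + (cosine E x v1 - cosine E x v2)) / 2,
     (\<theta> * cosine E x u2 - cosine E x u1 - (cosine E x v1 - cosine E x v2)) / 2}"
proof -
  have Rsym: "\<And>y z. R y z = R z y" and R0: "\<And>y. R y y = 0"
    using scheme by (simp_all add: sym_assoc_scheme_def)
  have u21: "adj R u2 u1" using u12 Rsym by (simp add: adj_def)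
  obtain c where Esym: "\<And>y z. E $ y $ z = E $ z $ y" and gram: "\<And>y z. E $ y \<bullet> E $ z = c (R y z)"
    using minimal_idempotent_gram[OF scheme E_min] by blast
  obtain h where same: "\<And>y z w. adj R y z \<Longrightarrow> adj R y w \<Longrightarrow> z \<noteq> w \<Longrightarrow> R z w = h"
    using neighbours_same_relation[OF scheme pm a1] by blast
  have dim3: "dim (range (($) E)) = 3"
    using E_mult by (simp add: row_rank_def rows_def row_def full_SetCompr_eq)
  have indep: "E $ z \<notin> span {E $ y}" if "adj R y z" for y z
    using gram_neighbour_not_in_span[where e="($) E", OF gram R0 Rsym conn _ that] dim3 by simp
  note cherry12 = gram_cherry_difference[where e="($) E", OF gram R0 Rsym same u12 v12]
  note cherry34 = gram_cherry_difference[where e="($) E", OF gram R0 Rsym same u21 v34]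
  have diff: "E $ v3 - E $ v4 = E $ v1 - E $ v2 \<or> E $ v3 - E $ v4 = - (E $ v1 - E $ v2)"
  proof (rule orthogonal_to_plane_dim3_eq_or_neg[OF dim3])
    show "E $ u1 \<noteq> 0" using indep[OF u21] span_zero by metis
    show "E $ u2 \<notin> span {E $ u1}" by (rule indep[OF u12])
    show "(E $ v1 - E $ v2) \<bullet> (E $ v1 - E $ v2) = (E $ v3 - E $ v4) \<bullet> (E $ v3 - E $ v4)"
      using cherry12(3) cherry34(3) by simp
  qed (simp_all add: span_base span_diff cherry12(1,2) cherry34(1,2))
  have sum: "E $ u1 + E $ v3 + E $ v4 = \<theta> *\<^sub>R E $ u2"
    using rel_matrix_eigen_neighbour_sum[OF E_eig val[rule_format] u21 v34(1,2)] v34(3-5) by auto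
  show ?thesis by (rule cosine_pair_from_rows[OF Esym sum diff])
qed

end
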